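(* Consider the spot market described in the context, with fixed leader productions $\mathbf x\in\mathbb{R}_+^M$. Fix a follower $l$ and suppose $f_j=f$ for every follower $j\ne l$ (with $f_l$ arbitrary). Then the spot market has a unique Nash equilibrium $\mathbf y$, and it satisfies, for each $j\ne l$, \[y_j=\Big[\frac1N\Big(\alpha_y+f-\sum_{i=1}^Mx_i-y_l\Big)\Big]_0^k.\]
   Context: Model: $M\ge1$ leaders, $N\ge2$ followers; inverse demand $P(q)=\alpha-\beta q$, $\alpha,\beta>0$; follower marginal cost $c>0$; each follower has capacity $k>0$. Given leader productions $x_1,\dots,x_M\ge0$ and follower forward positions $f_1,\dots,f_N\in\mathbb{R}$, the spot market is the game among the $N$ followers in which follower $j$ chooses $y_j\in[0,k]$ to maximize $P(\sum_i x_i+\sum_{j'}y_{j'})(y_j-f_j)-cy_j$. Normalized follower demand: $\alpha_y=(\alpha-c)/\beta$. For $a\le b$, $[z]_a^b=\min(\max(z,a),b)$. *)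

theory Defs
  imports Complex_Main
begin

definition clamp :: "real \<Rightarrow> real \<Rightarrow> real \<Rightarrow> real" where
  "clamp a b z = min (max z a) b"

definition spot_payoff ::
  "real \<Rightarrow> real \<Rightarrow> real \<Rightarrow> nat \<Rightarrow> nat \<Rightarrow> (nat \<Rightarrow> real) \<Rightarrow> (nat \<Rightarrow> real) \<Rightarrow> (nat \<Rightarrow> real) \<Rightarrow> nat \<Rightarrow> real" where
  "spot_payoff \<alpha> \<beta> c M N x f y j =
     (\<alpha> - \<beta> * ((\<Sum>i<M. x i) + (\<Sum>j'<N. y j'))) * (y j - f j) - c * y j"

definition spot_NE ::
  "real \<Rightarrow> real \<Rightarrow> real \<Rightarrow> real \<Rightarrow> nat \<Rightarrow> nat \<Rightarrow> (nat \<Rightarrow> real) \<Rightarrow> (nat \<Rightarrow> real) \<Rightarrow> (nat \<Rightarrow> real) \<Rightarrow> bool" where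
  "spot_NE \<alpha> \<beta> c k M N x f y \<longleftrightarrow>
     (\<forall>j<N. 0 \<le> y j \<and> y j \<le> k) \<and>
     (\<forall>j<N. \<forall>z. 0 \<le> z \<and> z \<le> k \<longrightarrow>
        spot_payoff \<alpha> \<beta> c M N x f (y(j := z)) j \<le> spot_payoff \<alpha> \<beta> c M N x f y j)"

end

theory Submission
  imports Defs
begin

text \<open>Follower j's payoff is, up to the factor \<beta> > 0, a concave quadratic in its own output,
  maximised over [0,k] at the clamp of D j - S, where D j = \<alpha>_y - X + f j (spot_residual),
  X is the total leader output and S the total follower output. So y is an equilibrium iff every
  y j equals this clamp, and then S is a fixed point of the antitone continuous map
  S \<mapsto> \<Sum>j. clamp 0 k (D j - S); such a fixed point exists by the intermediate value theorem
  and is unique by antitonicity. The followers j \<noteq> l face the same D j, hence share one output u,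
  and u = clamp 0 k (E - (N - 1) u) with E = D j - y l solves to u = clamp 0 k (E / N).\<close>

lemma clamp_bounds:
  assumes "a \<le> b"
  shows "a \<le> clamp a b d" "clamp a b d \<le> b"
  using assms by (auto simp: clamp_def)

lemma clamp_mono: "d \<le> e \<Longrightarrow> clamp a b d \<le> clamp a b e"
  unfolding clamp_def by linarith

lemma clamp_eq_iff_variational_ineq:
  fixes y D a b :: real
  assumes y: "a \<le> y" "y \<le> b"
  shows "(\<forall>z. a \<le> z \<and> z \<le> b \<longrightarrow> (z - y) * (D - z) \<le> 0) \<longleftrightarrow> y = clamp a b D"
proof
  assume H: "\<forall>z. a \<le> z \<and> z \<le> b \<longrightarrow> (z - y) * (D - z) \<le> 0"
  show "y = clamp a b D"
  proof (rule ccontr)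
    assume "y \<noteq> clamp a b D"
    then consider "y < clamp a b D" | "clamp a b D < y" by linarith
    then show False
    proof cases
      case 1
      define z where "z = (y + min b D) / 2"
      have "y < b" "y < D" using 1 y by (auto simp: clamp_def)
      then have "y < z" "z < D" "a \<le> z" "z \<le> b" using y unfolding z_def by auto
      then have "(z - y) * (D - z) > 0" by simp
      with H \<open>a \<le> z\<close> \<open>z \<le> b\<close> show False by force
    next
      case 2
      define z where "z = (y + max a D) / 2"
      have "a < y" "D < y" using 2 y by (auto simp: clamp_def)
      then have "z < y" "D < z" "a \<le> z" "z \<le> b" using y unfolding z_def by auto
      then have "(z - y) * (D - z) > 0" by (simp add: mult_neg_neg)
      with H \<open>a \<le> z\<close> \<open>z \<le> b\<close> show False by force
    qed
  qed
next
  assume "y = clamp a b D"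
  then consider "D \<le> a" "y = a" | "b \<le> D" "y = b" | "a \<le> D" "D \<le> b" "y = D"
    using y unfolding clamp_def by linarith
  then show "\<forall>z. a \<le> z \<and> z \<le> b \<longrightarrow> (z - y) * (D - z) \<le> 0"
  proof cases
    case 3
    then have "(z - y) * (D - z) = - ((z - D)\<^sup>2)" for z
      by (simp add: power2_eq_square algebra_simps)
    then show ?thesis by simp
  qed (auto simp: mult_nonneg_nonpos mult_nonpos_nonneg)
qed

lemma clamp_fixed_point_shift:
  fixes u v n a b :: real
  assumes "a \<le> b" and n: "n > 0" and u: "u = clamp a b (v - (n - 1) * u)"
  shows "u = clamp a b (v / n)"
proof -
  consider "v - (n - 1) * u \<le> a" "u = a" | "b \<le> v - (n - 1) * u" "u = b"
     | "a \<le> v - (n - 1) * u" "v - (n - 1) * u \<le> b" "u = v - (n - 1) * u"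
    using u \<open>a \<le> b\<close> unfolding clamp_def by linarith
  then show ?thesis
  proof cases
    case 1
    then have "v / n \<le> a" using n by (simp add: field_simps)
    then show ?thesis using 1 \<open>a \<le> b\<close> by (simp add: clamp_def)
  next
    case 2
    then have "b \<le> v / n" using n by (simp add: field_simps)
    then show ?thesis using 2 \<open>a \<le> b\<close> by (simp add: clamp_def)
  next
    case 3
    then have "v / n = u" using n by (simp add: field_simps)
    then show ?thesis using 3 by (simp add: clamp_def)
  qed
qed

lemma sum_lessThan_fun_upd:
  fixes y :: "nat \<Rightarrow> 'a::ab_group_add"
  assumes "j < N"
  shows "(\<Sum>i<N. (y(j := z)) i) = (\<Sum>i<N. y i) - y j + z"
proof -
  have "(\<Sum>i<N. (y(j := z)) i) = z + (\<Sum>i\<in>{..<N} - {j}. y i)"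
    using assms by (subst sum.remove[of _ j]) (auto intro!: sum.cong)
  moreover have "(\<Sum>i<N. y i) = y j + (\<Sum>i\<in>{..<N} - {j}. y i)"
    using assms by (subst sum.remove[of _ j]) auto
  ultimately show ?thesis by (simp add: algebra_simps)
qed

definition spot_residual :: "real \<Rightarrow> real \<Rightarrow> real \<Rightarrow> nat \<Rightarrow> (nat \<Rightarrow> real) \<Rightarrow> real \<Rightarrow> real" where
  "spot_residual \<alpha> \<beta> c M x fj = (\<alpha> - c) / \<beta> - (\<Sum>i<M. x i) + fj"

lemma spot_payoff_deviation:
  assumes "j < N" and "\<beta> > 0"
  shows "spot_payoff \<alpha> \<beta> c M N x f (y(j := z)) j - spot_payoff \<alpha> \<beta> c M N x f y j
    = \<beta> * ((z - y j) * (spot_residual \<alpha> \<beta> c M x (f j) - (\<Sum>i<N. y i) - z))"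
  using assms unfolding spot_payoff_def spot_residual_def sum_lessThan_fun_upd[OF assms(1)]
  by (simp add: field_simps)

lemma spot_NE_iff_best_response:
  assumes "\<beta> > 0" "k \<ge> 0"
  shows "spot_NE \<alpha> \<beta> c k M N x f y \<longleftrightarrow>
    (\<forall>j<N. y j = clamp 0 k (spot_residual \<alpha> \<beta> c M x (f j) - (\<Sum>i<N. y i)))"
    (is "_ \<longleftrightarrow> (\<forall>j<N. y j = clamp 0 k (?D j))")
proof -
  have no_gain: "spot_payoff \<alpha> \<beta> c M N x f (y(j := z)) j \<le> spot_payoff \<alpha> \<beta> c M N x f y j
      \<longleftrightarrow> (z - y j) * (?D j - z) \<le> 0" if "j < N" for j z
    using spot_payoff_deviation[OF that assms(1), of \<alpha> c M x f y z] assms(1)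
    by (smt (verit) mult_le_0_iff)
  have best: "(\<forall>z. 0 \<le> z \<and> z \<le> k \<longrightarrow> (z - y j) * (?D j - z) \<le> 0) \<longleftrightarrow> y j = clamp 0 k (?D j)"
    if "0 \<le> y j" "y j \<le> k" for j
    using clamp_eq_iff_variational_ineq[OF that] .
  show ?thesis
    unfolding spot_NE_def using no_gain best clamp_bounds[OF assms(2)] by metis
qed

definition spot_aggregate_response ::
    "real \<Rightarrow> real \<Rightarrow> real \<Rightarrow> real \<Rightarrow> nat \<Rightarrow> nat \<Rightarrow> (nat \<Rightarrow> real) \<Rightarrow> (nat \<Rightarrow> real) \<Rightarrow> real \<Rightarrow> real" where
  "spot_aggregate_response \<alpha> \<beta> c k M N x f S =
     (\<Sum>j<N. clamp 0 k (spot_residual \<alpha> \<beta> c M x (f j) - S))"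

lemma spot_aggregate_response_antimono:
  "S \<le> T \<Longrightarrow> spot_aggregate_response \<alpha> \<beta> c k M N x f T \<le> spot_aggregate_response \<alpha> \<beta> c k M N x f S"
  unfolding spot_aggregate_response_def by (intro sum_mono clamp_mono) linarith

lemma continuous_on_spot_aggregate_response:
  "continuous_on A (spot_aggregate_response \<alpha> \<beta> c k M N x f)"
  unfolding spot_aggregate_response_def clamp_def by (intro continuous_intros)

lemma spot_NE_iff_aggregate_fixed_point:
  assumes "\<beta> > 0" "k \<ge> 0"
  shows "spot_NE \<alpha> \<beta> c k M N x f y \<longleftrightarrow>
    (\<exists>S. S = spot_aggregate_response \<alpha> \<beta> c k M N x f S \<and>
         (\<forall>j<N. y j = clamp 0 k (spot_residual \<alpha> \<beta> c M x (f j) - S)))"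
proof -
  have "(\<forall>j<N. y j = clamp 0 k (spot_residual \<alpha> \<beta> c M x (f j) - S)) \<Longrightarrow>
      (\<Sum>j<N. y j) = spot_aggregate_response \<alpha> \<beta> c k M N x f S" for S
    unfolding spot_aggregate_response_def by (rule sum.cong) auto
  then show ?thesis
    unfolding spot_NE_iff_best_response[OF assms] by metis
qed

lemma spot_NE_exists:
  assumes "\<beta> > 0" "k \<ge> 0"
  shows "\<exists>y. spot_NE \<alpha> \<beta> c k M N x f y"
proof -
  let ?G = "spot_aggregate_response \<alpha> \<beta> c k M N x f"
  have "continuous_on {0 .. real N * k} (\<lambda>S. S - ?G S)"
    by (intro continuous_intros continuous_on_spot_aggregate_response)
  moreover have "0 - ?G 0 \<le> 0"
    unfolding spot_aggregate_response_def using clamp_bounds[OF assms(2)] by (simp add: sum_nonneg)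
  moreover have "?G (real N * k) \<le> (\<Sum>j<N. k)"
    unfolding spot_aggregate_response_def using clamp_bounds[OF assms(2)] by (intro sum_mono) auto
  then have "0 \<le> real N * k - ?G (real N * k)" by simp
  ultimately obtain S where "S - ?G S = 0"
    using IVT'[of "\<lambda>S. S - ?G S" 0 0 "real N * k"] assms(2) by auto
  then have "spot_NE \<alpha> \<beta> c k M N x f (\<lambda>j. clamp 0 k (spot_residual \<alpha> \<beta> c M x (f j) - S))"
    unfolding spot_NE_iff_aggregate_fixed_point[OF assms] by (intro exI[of _ S]) simp
  then show ?thesis by blast
qed

lemma spot_NE_unique:
  assumes "\<beta> > 0" "k \<ge> 0"
    and "spot_NE \<alpha> \<beta> c k M N x f y" "spot_NE \<alpha> \<beta> c k M N x f y'"
  shows "\<forall>j<N. y j = y' j"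
proof -
  let ?G = "spot_aggregate_response \<alpha> \<beta> c k M N x f"
  obtain S S' where S: "S = ?G S" "\<forall>j<N. y j = clamp 0 k (spot_residual \<alpha> \<beta> c M x (f j) - S)"
    and S': "S' = ?G S'" "\<forall>j<N. y' j = clamp 0 k (spot_residual \<alpha> \<beta> c M x (f j) - S')"
    using assms(3,4) unfolding spot_NE_iff_aggregate_fixed_point[OF assms(1,2)] by blast
  have "?G T \<le> ?G S" if "S \<le> T" for S T
    using that by (rule spot_aggregate_response_antimono)
  from this[of S S'] this[of S' S] have "S = S'"
    using S(1) S'(1) by linarith
  then show ?thesis using S(2) S'(2) by simp
qed

lemma spot_NE_symmetric_followers:
  assumes "\<beta> > 0" "k \<ge> 0" "l < N"
    and f: "\<forall>j<N. j \<noteq> l \<longrightarrow> f j = fo"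
    and NE: "spot_NE \<alpha> \<beta> c k M N x f y"
    and j: "j < N" "j \<noteq> l"
  shows "y j = clamp 0 k ((1 / real N) * ((\<alpha> - c) / \<beta> + fo - (\<Sum>i<M. x i) - y l))"
proof -
  define D where "D = spot_residual \<alpha> \<beta> c M x fo"
  define u where "u = clamp 0 k (D - (\<Sum>i<N. y i))"
  have "y i = clamp 0 k (spot_residual \<alpha> \<beta> c M x (f i) - (\<Sum>i<N. y i))" if "i < N" for i
    using NE that unfolding spot_NE_iff_best_response[OF assms(1,2)] by blast
  then have others: "y i = u" if "i < N" "i \<noteq> l" for i
    using that f unfolding u_def D_def by simp
  have "(\<Sum>i<N. y i) = y l + (\<Sum>i\<in>{..<N} - {l}. u)"
    using assms(3) others by (subst sum.remove[of _ l]) (auto intro!: sum.cong)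
  also have "\<dots> = y l + (real N - 1) * u"
    using assms(3) by (simp add: of_nat_diff)
  finally have "D - (\<Sum>i<N. y i) = (D - y l) - (real N - 1) * u"
    by simp
  then have "u = clamp 0 k ((D - y l) - (real N - 1) * u)"
    by (metis u_def)
  then have "u = clamp 0 k ((D - y l) / real N)"
    using assms(2,3) by (intro clamp_fixed_point_shift) auto
  moreover have "D - y l = (\<alpha> - c) / \<beta> + fo - (\<Sum>i<M. x i) - y l"
    unfolding D_def spot_residual_def by simp
  ultimately show ?thesis
    using others[OF j] by simp
qed

theorem proposition1:
  fixes \<alpha> \<beta> c k fl fo :: real and M N l :: nat and x f :: "nat \<Rightarrow> real"
  assumes "M \<ge> 1" and "N \<ge> 2" and "\<alpha> > 0" and "\<beta> > 0" and "c > 0" and "k > 0"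
    and "\<forall>i<M. x i \<ge> 0"
    and "l < N"
    and "\<forall>j<N. j \<noteq> l \<longrightarrow> f j = fo"
  shows "(\<exists>y. spot_NE \<alpha> \<beta> c k M N x f y) \<and>
         (\<forall>y y'. spot_NE \<alpha> \<beta> c k M N x f y \<longrightarrow> spot_NE \<alpha> \<beta> c k M N x f y' \<longrightarrow>
                 (\<forall>j<N. y j = y' j)) \<and>
         (\<forall>y. spot_NE \<alpha> \<beta> c k M N x f y \<longrightarrow>
            (\<forall>j<N. j \<noteq> l \<longrightarrow>
               y j = clamp 0 k ((1 / real N) * ((\<alpha> - c) / \<beta> + fo - (\<Sum>i<M. x i) - y l))))"
proof -
  have "\<beta> > 0" "k \<ge> 0" using assms(4,6) by auto
  then show ?thesis
    using spot_NE_exists spot_NE_unique spot_NE_symmetric_followers[OF _ _ assms(8,9)]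
    by (metis (no_types, lifting))
qed

end
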